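(* Let $\mathcal{X}=\{x_1,\dots,x_n\}$, let $\mathcal{X}_{\mathrm{in}}\subseteq\mathcal{X}$ have $n_{\mathrm{in}}\ge2$ points, let $1\le n_{\mathrm{out}}\le n_{\mathrm{in}}$, and let $\mathcal{X}_{\mathrm{out}}$ be a subset of $\mathcal{X}_{\mathrm{in}}$ of size $n_{\mathrm{out}}$ chosen uniformly at random (i.e., uniform subsampling without replacement). Then for every symmetric positive semidefinite $K\in\mathbb{R}^{n\times n}$ and every $\mathcal{I}\subseteq[n]$, $$\mathbb{E}\big[\mathrm{MMD}_K^2(p_{\mathrm{in}},q_{\mathrm{out}})\big]=\frac{1}{n_{\mathrm{out}}}\cdot\frac{n_{\mathrm{in}}-n_{\mathrm{out}}}{n_{\mathrm{in}}-1}\,C_K$$ and $$\mathbb{E}\big[\|K(p_{\mathrm{in}}-q_{\mathrm{out}})\|_{\mathcal{I}}^2\big]\ge\frac{1}{n_{\mathrm{out}}}\cdot\frac{n_{\mathrm{in}}-n_{\mathrm{out}}}{n_{\mathrm{in}}-1}\,\max_{i\in\mathcal{I}}C_{Ke_ie_i^\top K},$$ where for an $n\times n$ matrix $M$, $C_M:=\sum_{i=1}^n p_{\mathrm{in},i}M_{ii}-p_{\mathrm{in}}^\top Mp_{\mathrm{in}}$.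
   Context: $p_{\mathrm{in}},q_{\mathrm{out}}\in\mathbb{R}^n$ are given by $p_{\mathrm{in},i}=\mathbf{1}\{x_i\in\mathcal{X}_{\mathrm{in}}\}/n_{\mathrm{in}}$ and $q_{\mathrm{out},i}=\mathbf{1}\{x_i\in\mathcal{X}_{\mathrm{out}}\}/n_{\mathrm{out}}$. $\mathrm{MMD}_K(p,q):=\sqrt{(p-q)^\top K(p-q)}$ and $\|K(p_{\mathrm{in}}-q_{\mathrm{out}})\|_{\mathcal{I}}:=\max_{i\in\mathcal{I}}|e_i^\top K(p_{\mathrm{in}}-q_{\mathrm{out}})|$, with $e_i$ the $i$-th standard basis vector. *)

theory Defs
  imports "HOL-Probability.Probability"
begin

text \<open>Points x_1..x_n are identified with the indices of the finite type 'n.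
  Uniform empirical distribution on a set S of indices.\<close>
definition unif_vec :: "'n::finite set \<Rightarrow> real^'n" where
  "unif_vec S = (\<chi> i. if i \<in> S then 1 / real (card S) else 0)"

definition MMD :: "real^'n^'n \<Rightarrow> real^'n \<Rightarrow> real^'n \<Rightarrow> real" where
  "MMD K p q = sqrt ((p - q) \<bullet> (K *v (p - q)))"

definition normI :: "real^'n \<Rightarrow> 'n set \<Rightarrow> real" where
  "normI v I = Max ((\<lambda>i. \<bar>axis i 1 \<bullet> v\<bar>) ` I)"

definition C_mat :: "real^'n^'n \<Rightarrow> real^'n \<Rightarrow> real" where
  "C_mat M p = (\<Sum>i\<in>UNIV. p $ i * M $ i $ i) - p \<bullet> (M *v p)"

definition outer_e :: "'n::finite \<Rightarrow> real^'n^'n" where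
  "outer_e i = (\<chi> a b. axis i (1::real) $ a * axis i (1::real) $ b)"

definition psd :: "real^'n^'n \<Rightarrow> bool" where
  "psd K \<longleftrightarrow> transpose K = K \<and> (\<forall>x. 0 \<le> x \<bullet> (K *v x))"

end

theory Submission
  imports Defs
begin

text \<open>Under uniform subsampling of \<open>m\<close> out of \<open>N\<close> points, a fixed set of \<open>k\<close> points is contained in
  the sample with probability \<open>(m choose k) / (N choose k)\<close>. With \<open>k = 1, 2\<close> this gives the
  first two moments of the empirical distribution \<open>q\<close> of the sample: \<open>q\<close> is unbiased for \<open>p\<close>
  and its covariance is \<open>(N - m) / (m (N - 1)) (diag p - p p\<^sup>T)\<close>. Any quadratic form in \<open>p - q\<close> then
  has expectation \<open>(N - m) / (m (N - 1)) C\<^sub>M\<close>; for the MMD take \<open>M = K\<close>, and for the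
  coordinate \<open>i\<close> of \<open>K (p - q)\<close> take \<open>M = K e\<^sub>i e\<^sub>i\<^sup>T K\<close>, which is dominated by the maximum
  over \<open>I\<close>.\<close>

definition random_subset :: "nat \<Rightarrow> 'a set \<Rightarrow> 'a set pmf" where
  "random_subset m X = pmf_of_set {S. S \<subseteq> X \<and> card S = m}"

lemma subsets_of_card_nonempty:
  assumes "finite X" "m \<le> card X"
  shows "{S. S \<subseteq> X \<and> card S = m} \<noteq> {}"
  using obtain_subset_with_card_n[OF assms(2)] by blast

lemma set_pmf_random_subset:
  assumes "finite X" "m \<le> card X"
  shows "set_pmf (random_subset m X) = {S. S \<subseteq> X \<and> card S = m}"
proof -
  have "finite {S. S \<subseteq> X \<and> card S = m}"
    using assms(1) by (rule finite_subset[rotated, OF finite_Pow_iff[THEN iffD2]]) auto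
  then show ?thesis
    unfolding random_subset_def using subsets_of_card_nonempty[OF assms] by simp
qed

lemma integrable_random_subset [simp]:
  fixes f :: "'a set \<Rightarrow> real"
  assumes "finite X" "m \<le> card X"
  shows "integrable (random_subset m X) f"
  using assms by (simp add: integrable_measure_pmf_finite set_pmf_random_subset)

lemma card_subsets_of_card_supset:
  assumes "finite X" "B \<subseteq> X" "card B \<le> m"
  shows "card {S. S \<subseteq> X \<and> card S = m \<and> B \<subseteq> S} = (card X - card B) choose (m - card B)"
proof -
  have "finite B" using assms finite_subset by blast
  have "bij_betw (\<lambda>T. T \<union> B)
          {T. T \<subseteq> X - B \<and> card T = m - card B} {S. S \<subseteq> X \<and> card S = m \<and> B \<subseteq> S}"
  proof (rule bij_betw_byWitness[where f' = "\<lambda>S. S - B"])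
    show "(\<lambda>T. T \<union> B) ` {T. T \<subseteq> X - B \<and> card T = m - card B} \<subseteq> {S. S \<subseteq> X \<and> card S = m \<and> B \<subseteq> S}"
    proof safe
      fix T assume "T \<subseteq> X - B" "card T = m - card B"
      moreover from this have "finite T" using assms(1) finite_subset by blast
      ultimately show "card (T \<union> B) = m"
        using assms(3) \<open>finite B\<close> by (subst card_Un_disjoint) auto
    qed (use assms in auto)
    show "(\<lambda>S. S - B) ` {S. S \<subseteq> X \<and> card S = m \<and> B \<subseteq> S} \<subseteq> {T. T \<subseteq> X - B \<and> card T = m - card B}"
      using \<open>finite B\<close> by (auto simp: card_Diff_subset)
  qed auto
  then have "card {S. S \<subseteq> X \<and> card S = m \<and> B \<subseteq> S} = card (X - B) choose (m - card B)"
    using assms by (simp add: bij_betw_same_card[symmetric] n_subsets)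
  then show ?thesis
    using assms \<open>finite B\<close> by (simp add: card_Diff_subset)
qed

lemma prob_random_subset_supset:
  assumes "finite X" "B \<subseteq> X" "m \<le> card X"
  shows "measure_pmf.prob (random_subset m X) {S. B \<subseteq> S}
           = real (m choose card B) / real (card X choose card B)"
proof (cases "card B \<le> m")
  case True
  have "real ((card X choose m) * (m choose card B))
      = real ((card X choose card B) * ((card X - card B) choose (m - card B)))"
    using True assms(3) by (simp only: choose_mult)
  moreover have "card X choose m > 0" "card X choose card B > 0"
    using True assms(3) by simp_all
  ultimately show ?thesis
    using assms True subsets_of_card_nonempty[OF assms(1,3)]
    by (simp add: random_subset_def measure_pmf_of_set Int_def conj_assoc card_subsets_of_card_supset
        n_subsets field_simps)
next
  case False
  then have "{S. S \<subseteq> X \<and> card S = m} \<inter> {S. B \<subseteq> S} = {}"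
    using assms(1) by (auto dest: card_mono[rotated] intro: finite_subset)
  then show ?thesis
    using False assms subsets_of_card_nonempty[OF assms(1,3)] by (simp add: random_subset_def measure_pmf_of_set)
qed

lemma expectation_random_subset_cong:
  assumes "finite X" "m \<le> card X"
    and "\<And>S. S \<subseteq> X \<Longrightarrow> card S = m \<Longrightarrow> f S = g S"
  shows "measure_pmf.expectation (random_subset m X) f = measure_pmf.expectation (random_subset m X) g"
  using assms by (intro integral_cong_AE) (auto simp: AE_measure_pmf_iff set_pmf_random_subset)

lemma real_choose_two: "real (n choose 2) = real n * (real n - 1) / 2"
proof -
  have "2 * (n choose 2) = n * (n - 1)"
    using binomial_absorption[of 1 n] by (simp add: numeral_2_eq_2)
  then have "2 * real (n choose 2) = real n * real (n - 1)"
    by (metis of_nat_mult of_nat_numeral)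
  then show ?thesis by (cases n) auto
qed

lemma expectation_unif_vec_random_subset:
  fixes X :: "'n::finite set"
  assumes "1 \<le> m" "m \<le> card X"
  shows "measure_pmf.expectation (random_subset m X) (\<lambda>S. unif_vec S $ a) = unif_vec X $ a"
proof (cases "a \<in> X")
  case True
  have "measure_pmf.expectation (random_subset m X) (\<lambda>S. unif_vec S $ a)
      = measure_pmf.expectation (random_subset m X) (\<lambda>S. indicator {S. {a} \<subseteq> S} S / real m)"
    using assms by (intro expectation_random_subset_cong) (auto simp: unif_vec_def)
  also have "\<dots> = unif_vec X $ a"
    using assms True prob_random_subset_supset[of X "{a}" m] by (simp add: unif_vec_def)
  finally show ?thesis .
next
  case False
  then have "measure_pmf.expectation (random_subset m X) (\<lambda>S. unif_vec S $ a)
      = measure_pmf.expectation (random_subset m X) (\<lambda>S. 0)"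
    using assms by (intro expectation_random_subset_cong) (auto simp: unif_vec_def)
  then show ?thesis using False by (simp add: unif_vec_def)
qed

lemma expectation_unif_vec_mult_random_subset:
  fixes X :: "'n::finite set"
  assumes "1 \<le> m" "m \<le> card X" "a \<in> X" "b \<in> X"
  shows "measure_pmf.expectation (random_subset m X) (\<lambda>S. unif_vec S $ a * unif_vec S $ b)
           = (if a = b then 1 else (real m - 1) / (real (card X) - 1)) / (real m * real (card X))"
proof -
  have "measure_pmf.expectation (random_subset m X) (\<lambda>S. unif_vec S $ a * unif_vec S $ b)
      = measure_pmf.expectation (random_subset m X) (\<lambda>S. indicator {S. {a, b} \<subseteq> S} S / real m ^ 2)"
    using assms by (intro expectation_random_subset_cong) (auto simp: unif_vec_def power2_eq_square)
  also have "\<dots> = real (m choose card {a, b}) / real (card X choose card {a, b}) / real m ^ 2"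
    using assms prob_random_subset_supset[of X "{a, b}" m] by simp
  also have "\<dots> = (if a = b then 1 else (real m - 1) / (real (card X) - 1)) / (real m * real (card X))"
  proof (cases "a = b")
    case True
    then show ?thesis using assms by (simp add: power2_eq_square)
  next
    case False
    then have "card {a, b} = 2" "real (card X) - 1 \<noteq> 0"
      using assms card_mono[of X "{a, b}"] by simp_all
    moreover have "real m \<noteq> 0" "real (card X) \<noteq> 0" using assms by auto
    ultimately show ?thesis
      using False by (simp only: real_choose_two) (simp add: field_simps power2_eq_square)
  qed
  finally show ?thesis .
qed

lemma covariance_unif_vec_random_subset:
  fixes X :: "'n::finite set"
  assumes "2 \<le> card X" "1 \<le> m" "m \<le> card X"
  shows "measure_pmf.expectation (random_subset m X)
           (\<lambda>S. (unif_vec X - unif_vec S) $ a * (unif_vec X - unif_vec S) $ b)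
         = 1 / real m * ((real (card X) - real m) / (real (card X) - 1))
           * ((if a = b then unif_vec X $ a else 0) - unif_vec X $ a * unif_vec X $ b)"
proof -
  let ?E = "measure_pmf.expectation (random_subset m X)"
  let ?p = "unif_vec X"
  have fin: "finite X" using assms(1) card.infinite by fastforce
  have "?E (\<lambda>S. (?p - unif_vec S) $ a * (?p - unif_vec S) $ b)
      = ?E (\<lambda>S. unif_vec S $ a * unif_vec S $ b) - ?p $ a * ?E (\<lambda>S. unif_vec S $ b)
        - ?p $ b * ?E (\<lambda>S. unif_vec S $ a) + ?p $ a * ?p $ b"
    using fin assms(3) by (simp add: algebra_simps)
  also have "\<dots> = ?E (\<lambda>S. unif_vec S $ a * unif_vec S $ b) - ?p $ a * ?p $ b"
    using assms(2,3) by (simp add: expectation_unif_vec_random_subset)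
  also have "\<dots> = 1 / real m * ((real (card X) - real m) / (real (card X) - 1))
           * ((if a = b then ?p $ a else 0) - ?p $ a * ?p $ b)"
  proof (cases "a \<in> X \<and> b \<in> X")
    case True
    moreover have "real (card X) - 1 \<noteq> 0" "real (card X) \<noteq> 0" "real m \<noteq> 0"
      using assms by auto
    ultimately show ?thesis
      unfolding expectation_unif_vec_mult_random_subset[OF assms(2,3) True[THEN conjunct1] True[THEN conjunct2]]
      using True by (simp add: unif_vec_def field_simps)
  next
    case False
    then have "?E (\<lambda>S. unif_vec S $ a * unif_vec S $ b) = ?E (\<lambda>S. 0)"
      using fin assms(3) by (intro expectation_random_subset_cong) (auto simp: unif_vec_def)
    with False show ?thesis by (auto simp: unif_vec_def)
  qed
  finally show ?thesis .
qed

lemma inner_matrix_vector_mult_self: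
  "(v::real^'n::finite) \<bullet> (M *v v) = (\<Sum>a\<in>UNIV. \<Sum>b\<in>UNIV. M $ a $ b * (v $ a * v $ b))"
  by (simp add: inner_vec_def matrix_vector_mult_def sum_distrib_left mult_ac)

lemma C_mat_eq_double_sum:
  "C_mat M (p::real^'n::finite)
     = (\<Sum>a\<in>UNIV. \<Sum>b\<in>UNIV. M $ a $ b * ((if a = b then p $ a else 0) - p $ a * p $ b))"
proof -
  have "M $ a $ b * ((if a = b then p $ a else 0) - p $ a * p $ b)
      = (if a = b then p $ a * M $ a $ b else 0) - M $ a $ b * (p $ a * p $ b)" for a b
    by (simp add: algebra_simps)
  then show ?thesis
    by (simp add: C_mat_def inner_matrix_vector_mult_self sum_subtractf)
qed

lemma expectation_quadratic_form_random_subset: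
  fixes X :: "'n::finite set" and M :: "real^'n^'n"
  assumes "2 \<le> card X" "1 \<le> m" "m \<le> card X"
  shows "measure_pmf.expectation (random_subset m X)
           (\<lambda>S. (unif_vec X - unif_vec S) \<bullet> (M *v (unif_vec X - unif_vec S)))
         = 1 / real m * ((real (card X) - real m) / (real (card X) - 1)) * C_mat M (unif_vec X)"
proof -
  let ?E = "measure_pmf.expectation (random_subset m X)"
  let ?d = "\<lambda>S. unif_vec X - unif_vec S"
  have fin: "finite X" using assms(1) card.infinite by fastforce
  have "?E (\<lambda>S. ?d S \<bullet> (M *v ?d S)) = ?E (\<lambda>S. \<Sum>a\<in>UNIV. \<Sum>b\<in>UNIV. M $ a $ b * (?d S $ a * ?d S $ b))"
    by (simp only: inner_matrix_vector_mult_self)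
  also have "\<dots> = (\<Sum>a\<in>UNIV. \<Sum>b\<in>UNIV. M $ a $ b * ?E (\<lambda>S. ?d S $ a * ?d S $ b))"
    using fin assms(3) by (simp add: integral_sum del: vector_minus_component)
  also have "\<dots> = 1 / real m * ((real (card X) - real m) / (real (card X) - 1)) * C_mat M (unif_vec X)"
    by (simp only: covariance_unif_vec_random_subset[OF assms] C_mat_eq_double_sum sum_distrib_left mult_ac)
  finally show ?thesis .
qed

lemma outer_e_mult_vec: "outer_e i *v u = u $ i *\<^sub>R axis i (1::real)"
  by (simp add: outer_e_def matrix_vector_mult_def axis_def vec_eq_iff if_distrib[of "\<lambda>x. x * u $ _"] cong: if_cong)

lemma quadratic_form_outer_e:
  fixes K :: "real^'n::finite^'n"
  assumes "transpose K = K"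
  shows "w \<bullet> ((K ** outer_e i ** K) *v w) = (axis i 1 \<bullet> (K *v w))\<^sup>2"
proof -
  have "w \<bullet> ((K ** outer_e i ** K) *v w) = (K *v w) $ i * ((w v* K) \<bullet> axis i 1)"
    by (simp add: matrix_vector_mul_assoc[symmetric] outer_e_mult_vec matrix_vector_mult_scaleR dot_lmul_matrix)
  also have "w v* K = K *v w"
    by (metis assms transpose_matrix_vector)
  finally show ?thesis
    by (simp add: inner_axis' inner_axis power2_eq_square)
qed

lemma abs_inner_axis_le_normI: "i \<in> I \<Longrightarrow> \<bar>axis i 1 \<bullet> v\<bar> \<le> normI v (I :: 'n::finite set)"
  unfolding normI_def by (rule Max_ge) auto

lemma inner_axis_square_le_normI_square: "i \<in> I \<Longrightarrow> (axis i 1 \<bullet> v)\<^sup>2 \<le> (normI v (I :: 'n::finite set))\<^sup>2"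
proof -
  assume "i \<in> I"
  then have "\<bar>axis i 1 \<bullet> v\<bar>\<^sup>2 \<le> (normI v I)\<^sup>2"
    by (intro power_mono abs_inner_axis_le_normI) auto
  then show ?thesis by simp
qed

theorem proposition1:
  fixes Xin :: "'n::finite set" and nout :: nat and K :: "real^'n^'n" and I :: "'n set"
  assumes "card Xin \<ge> 2" and "1 \<le> nout" and "nout \<le> card Xin"
    and "psd K" and "I \<noteq> {}"
  defines "Sub \<equiv> pmf_of_set {S. S \<subseteq> Xin \<and> card S = nout}"
  shows "(measure_pmf.expectation Sub (\<lambda>S. (MMD K (unif_vec Xin) (unif_vec S))\<^sup>2)
           = 1 / real nout * ((real (card Xin) - real nout) / (real (card Xin) - 1))
             * C_mat K (unif_vec Xin))
    \<and> (measure_pmf.expectation Sub (\<lambda>S. (normI (K *v (unif_vec Xin - unif_vec S)) I)\<^sup>2)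
           \<ge> 1 / real nout * ((real (card Xin) - real nout) / (real (card Xin) - 1))
             * Max ((\<lambda>i. C_mat (K ** outer_e i ** K) (unif_vec Xin)) ` I))"
proof -
  let ?p = "unif_vec Xin"
  let ?\<kappa> = "1 / real nout * ((real (card Xin) - real nout) / (real (card Xin) - 1))"
  have Sub: "Sub = random_subset nout Xin"
    unfolding Sub_def random_subset_def ..
  have symK: "transpose K = K" and psdK: "\<And>x. 0 \<le> x \<bullet> (K *v x)"
    using assms(4) unfolding psd_def by auto
  have mmd: "measure_pmf.expectation Sub (\<lambda>S. (MMD K ?p (unif_vec S))\<^sup>2) = ?\<kappa> * C_mat K ?p"
    unfolding Sub MMD_def using psdK expectation_quadratic_form_random_subset[OF assms(1-3)] by simp
  obtain i where "i \<in> I"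
    and i_max: "Max ((\<lambda>i. C_mat (K ** outer_e i ** K) ?p) ` I) = C_mat (K ** outer_e i ** K) ?p"
  proof -
    have "Max ((\<lambda>i. C_mat (K ** outer_e i ** K) ?p) ` I) \<in> (\<lambda>i. C_mat (K ** outer_e i ** K) ?p) ` I"
      using assms(5) by (intro Max_in) auto
    then show thesis using that by auto
  qed
  have "?\<kappa> * C_mat (K ** outer_e i ** K) ?p
      = measure_pmf.expectation Sub (\<lambda>S. (axis i 1 \<bullet> (K *v (?p - unif_vec S)))\<^sup>2)"
    unfolding Sub expectation_quadratic_form_random_subset[OF assms(1-3), symmetric]
    by (simp add: quadratic_form_outer_e[OF symK])
  also have "\<dots> \<le> measure_pmf.expectation Sub (\<lambda>S. (normI (K *v (?p - unif_vec S)) I)\<^sup>2)"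
    unfolding Sub using assms(3) \<open>i \<in> I\<close>
    by (intro integral_mono inner_axis_square_le_normI_square integrable_random_subset) simp_all
  finally have "?\<kappa> * C_mat (K ** outer_e i ** K) ?p
      \<le> measure_pmf.expectation Sub (\<lambda>S. (normI (K *v (?p - unif_vec S)) I)\<^sup>2)" .
  with mmd show ?thesis
    unfolding i_max by (rule conjI)
qed

end
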